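(* Let $G$ be a finite group and $[H],[K]\in\widetilde\Pi(G)$. Let \[X=\bigcap_{\substack{\bar L\in\mathcal{L}(G)\\ \pi_e(H),\pi_e(K)\subseteq\pi_e(\bar L)}}\pi_e(\bar L).\] Then $\{[H],[K]\}$ has a least upper bound in $\widetilde\Pi(G)$ if and only if there exists a subgroup $L'\le G$ with $\pi_e(L')=X$, and in that case the least upper bound is $[L']$. Similarly, let \[Y=\bigcup_{\substack{\widehat L\in\mathcal{L}(G)\\ \pi_e(\widehat L)\subseteq\pi_e(H)\text{ and }\pi_e(\widehat L)\subseteq\pi_e(K)}}\pi_e(\widehat L).\] Then $\{[H],[K]\}$ has a greatest lower bound in $\widetilde\Pi(G)$ if and only if there exists a subgroup $L''\le G$ with $\pi_e(L'')=Y$, and in that case the greatest lower bound is $[L'']$.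
   Context: For a finite group $G$ and a subgroup $H\le G$, let $\pi_e(H)=\{o(x)\mid x\in H\}$. Let $\mathcal{L}(G)$ be the set of subgroups of $G$; define $H_1\equiv H_2$ iff $\pi_e(H_1)=\pi_e(H_2)$, with class $[H]$. The poset $\widetilde\Pi(G)$ is $\mathcal{L}(G)/\!\equiv$ ordered by $[H_1]\lesssim[H_2]$ iff $\pi_e(H_1)\subseteq\pi_e(H_2)$. *)

theory Defs
  imports "HOL-Algebra.Algebra"
begin

definition spec :: "('a, 'b) monoid_scheme \<Rightarrow> 'a set \<Rightarrow> nat set" where
  "spec G H = (\<lambda>x. group.ord G x) ` H"

definition cls :: "('a, 'b) monoid_scheme \<Rightarrow> 'a set \<Rightarrow> 'a set set" where
  "cls G H = {K. subgroup K G \<and> spec G K = spec G H}"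

definition PiT :: "('a, 'b) monoid_scheme \<Rightarrow> 'a set set set" where
  "PiT G = cls G ` {H. subgroup H G}"

definition cls_le :: "('a, 'b) monoid_scheme \<Rightarrow> 'a set set \<Rightarrow> 'a set set \<Rightarrow> bool" where
  "cls_le G A B \<longleftrightarrow> (\<exists>H1 H2. subgroup H1 G \<and> subgroup H2 G \<and> A = cls G H1 \<and> B = cls G H2
                          \<and> spec G H1 \<subseteq> spec G H2)"

definition is_lub2 :: "('a, 'b) monoid_scheme \<Rightarrow> 'a set set \<Rightarrow> 'a set set \<Rightarrow> 'a set set \<Rightarrow> bool" where
  "is_lub2 G A B C \<longleftrightarrow> C \<in> PiT G \<and> cls_le G A C \<and> cls_le G B C \<and>
     (\<forall>D\<in>PiT G. cls_le G A D \<and> cls_le G B D \<longrightarrow> cls_le G C D)"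

definition is_glb2 :: "('a, 'b) monoid_scheme \<Rightarrow> 'a set set \<Rightarrow> 'a set set \<Rightarrow> 'a set set \<Rightarrow> bool" where
  "is_glb2 G A B C \<longleftrightarrow> C \<in> PiT G \<and> cls_le G C A \<and> cls_le G C B \<and>
     (\<forall>D\<in>PiT G. cls_le G D A \<and> cls_le G D B \<longrightarrow> cls_le G D C)"

end

theory Submission
  imports Defs
begin

text \<open>The map [H] \<mapsto> pi_e(H) identifies the poset of classes with the family of spectra of
  subgroups, ordered by inclusion. In any family of sets ordered by inclusion, a least upper bound
  of two members is the intersection of all their common upper bounds, and a greatest lower bound
  is the union of all their common lower bounds; so the bound exists exactly when that
  intersection (union) is itself a spectrum.\<close>

lemma least_common_superset_iff_eq_Inter:
  assumes "M \<in> S"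
  shows "(A \<subseteq> M \<and> B \<subseteq> M \<and> (\<forall>L\<in>S. A \<subseteq> L \<and> B \<subseteq> L \<longrightarrow> M \<subseteq> L))
    \<longleftrightarrow> M = \<Inter>{L \<in> S. A \<subseteq> L \<and> B \<subseteq> L}"
  using assms by blast

lemma greatest_common_subset_iff_eq_Union:
  assumes "M \<in> S"
  shows "(M \<subseteq> A \<and> M \<subseteq> B \<and> (\<forall>L\<in>S. L \<subseteq> A \<and> L \<subseteq> B \<longrightarrow> L \<subseteq> M))
    \<longleftrightarrow> M = \<Union>{L \<in> S. L \<subseteq> A \<and> L \<subseteq> B}"
  using assms by blast

lemma spec_eq_if_cls_eq:
  assumes "subgroup A G" "cls G H = cls G A"
  shows "spec G A = spec G H"
proof -
  have "A \<in> cls G A" using assms(1) by (simp add: cls_def)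
  then have "A \<in> cls G H" using assms(2) by simp
  then show ?thesis by (simp add: cls_def)
qed

lemma cls_le_cls_iff:
  assumes "subgroup A G" "subgroup B G"
  shows "cls_le G (cls G A) (cls G B) \<longleftrightarrow> spec G A \<subseteq> spec G B"
  using assms spec_eq_if_cls_eq[of A G] spec_eq_if_cls_eq[of B G] unfolding cls_le_def by metis

lemma ball_PiT_iff: "(\<forall>D\<in>PiT G. P D) \<longleftrightarrow> (\<forall>L. subgroup L G \<longrightarrow> P (cls G L))"
  unfolding PiT_def by blast

lemma ex_PiT_iff: "(\<exists>D. D \<in> PiT G \<and> P D) \<longleftrightarrow> (\<exists>L. subgroup L G \<and> P (cls G L))"
  unfolding PiT_def by blast

lemma spectra_Collect_eq:
  "{spec G L | L. subgroup L G \<and> P (spec G L)} = {Z. Z \<in> spec G ` {L. subgroup L G} \<and> P Z}"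
  by blast

lemma is_lub2_cls_iff:
  assumes "subgroup H G" "subgroup K G" "subgroup M G"
  shows "is_lub2 G (cls G H) (cls G K) (cls G M) \<longleftrightarrow>
    spec G M = \<Inter>{spec G L | L. subgroup L G \<and> spec G H \<subseteq> spec G L \<and> spec G K \<subseteq> spec G L}"
proof -
  have "is_lub2 G (cls G H) (cls G K) (cls G M) \<longleftrightarrow>
      spec G H \<subseteq> spec G M \<and> spec G K \<subseteq> spec G M \<and>
      (\<forall>Z\<in>spec G ` {L. subgroup L G}. spec G H \<subseteq> Z \<and> spec G K \<subseteq> Z \<longrightarrow> spec G M \<subseteq> Z)"
    using assms by (auto simp: is_lub2_def ball_PiT_iff cls_le_cls_iff PiT_def)
  also have "\<dots> \<longleftrightarrow> spec G M = \<Inter>{Z. Z \<in> spec G ` {L. subgroup L G} \<and> spec G H \<subseteq> Z \<and> spec G K \<subseteq> Z}"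
    using assms(3) by (intro least_common_superset_iff_eq_Inter) blast
  finally show ?thesis
    by (simp only: spectra_Collect_eq[of G "\<lambda>Z. spec G H \<subseteq> Z \<and> spec G K \<subseteq> Z"])
qed

lemma is_glb2_cls_iff:
  assumes "subgroup H G" "subgroup K G" "subgroup M G"
  shows "is_glb2 G (cls G H) (cls G K) (cls G M) \<longleftrightarrow>
    spec G M = \<Union>{spec G L | L. subgroup L G \<and> spec G L \<subseteq> spec G H \<and> spec G L \<subseteq> spec G K}"
proof -
  have "is_glb2 G (cls G H) (cls G K) (cls G M) \<longleftrightarrow>
      spec G M \<subseteq> spec G H \<and> spec G M \<subseteq> spec G K \<and>
      (\<forall>Z\<in>spec G ` {L. subgroup L G}. Z \<subseteq> spec G H \<and> Z \<subseteq> spec G K \<longrightarrow> Z \<subseteq> spec G M)"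
    using assms by (auto simp: is_glb2_def ball_PiT_iff cls_le_cls_iff PiT_def)
  also have "\<dots> \<longleftrightarrow> spec G M = \<Union>{Z. Z \<in> spec G ` {L. subgroup L G} \<and> Z \<subseteq> spec G H \<and> Z \<subseteq> spec G K}"
    using assms(3) by (intro greatest_common_subset_iff_eq_Union) blast
  finally show ?thesis
    by (simp only: spectra_Collect_eq[of G "\<lambda>Z. Z \<subseteq> spec G H \<and> Z \<subseteq> spec G K"])
qed

theorem lemma2p4:
  fixes G :: "('a, 'b) monoid_scheme" and H K :: "'a set"
  assumes "group G" and "finite (carrier G)"
    and "subgroup H G" and "subgroup K G"
  defines "SX \<equiv> \<Inter>{spec G L | L. subgroup L G \<and> spec G H \<subseteq> spec G L \<and> spec G K \<subseteq> spec G L}"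
    and "SY \<equiv> \<Union>{spec G L | L. subgroup L G \<and> spec G L \<subseteq> spec G H \<and> spec G L \<subseteq> spec G K}"
  shows "((\<exists>C. is_lub2 G (cls G H) (cls G K) C) \<longleftrightarrow> (\<exists>M1. subgroup M1 G \<and> spec G M1 = SX))
       \<and> (\<forall>M1. subgroup M1 G \<and> spec G M1 = SX \<longrightarrow> is_lub2 G (cls G H) (cls G K) (cls G M1))
       \<and> ((\<exists>C. is_glb2 G (cls G H) (cls G K) C) \<longleftrightarrow> (\<exists>M2. subgroup M2 G \<and> spec G M2 = SY))
       \<and> (\<forall>M2. subgroup M2 G \<and> spec G M2 = SY \<longrightarrow> is_glb2 G (cls G H) (cls G K) (cls G M2))"
proof -
  have lub: "is_lub2 G (cls G H) (cls G K) (cls G M) \<longleftrightarrow> spec G M = SX" if "subgroup M G" for M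
    unfolding SX_def using assms(3,4) that by (rule is_lub2_cls_iff)
  have glb: "is_glb2 G (cls G H) (cls G K) (cls G M) \<longleftrightarrow> spec G M = SY" if "subgroup M G" for M
    unfolding SY_def using assms(3,4) that by (rule is_glb2_cls_iff)
  have "(\<exists>C. is_lub2 G (cls G H) (cls G K) C) \<longleftrightarrow> (\<exists>M. subgroup M G \<and> spec G M = SX)"
    using ex_PiT_iff[of G "is_lub2 G (cls G H) (cls G K)"] lub by (auto simp: is_lub2_def)
  moreover have "(\<exists>C. is_glb2 G (cls G H) (cls G K) C) \<longleftrightarrow> (\<exists>M. subgroup M G \<and> spec G M = SY)"
    using ex_PiT_iff[of G "is_glb2 G (cls G H) (cls G K)"] glb by (auto simp: is_glb2_def)
  ultimately show ?thesis using lub glb by blast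
qed

end
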